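(* Let $(\Gamma,\lambda)$ be a tree plan. For every $B\subseteq\Gamma(\omega)$, the model-theoretic algebraic closure of $B$ in the $\mathcal{L}_\Gamma$-structure $\Gamma(\omega)$ equals $\mathrm{tcl}(B)$.
   Context: Tree plans: a tree plan is a pair $(\Gamma,\lambda)$ where $\Gamma\subseteq\omega^{<\omega}$ is a finite set of finite sequences containing the empty sequence $\langle\rangle$ and closed under initial segments, and $\lambda:\Gamma\to\{1,\infty\}$ with $\lambda(\langle\rangle)=1$. $\Gamma(\omega)$ is the set of finite sequences $\langle(i_0,t_0),\dots,(i_n,t_n)\rangle$ (including the empty one) such that $\langle i_0,\dots,i_n\rangle\in\Gamma$ and for each $k\le n$: $t_k=\star$ (a fixed symbol not in $\omega$) if $\lambda(\langle i_0,\dots,i_k\rangle)=1$, and $t_k\in\omega$ if $\lambda(\langle i_0,\dots,i_k\rangle)=\infty$. It is a tree under the initial-segment order $\le$, in the language $\mathcal{L}_t$ with $\le$, root constant $\varepsilon$ (the empty sequence), meet $\sqcap$ and $\mathtt{pred}$ (delete last entry; $\mathtt{pred}(\varepsilon)=\varepsilon$). The map $\pi:\Gamma(\omega)\to\Gamma$ sends $\langle(i_0,t_0),\dots,(i_n,t_n)\rangle$ to $\langle i_0,\dots,i_n\rangle$. $\mathcal{L}_\Gamma$ is $\mathcal{L}_t$ plus unary predicates $P_\sigma$ ($\sigma\in\Gamma$) with $P_\sigma=\pi^{-1}(\sigma)$. Tree closure: for $B\subseteq\Gamma(\omega)$, $\mathrm{tcl}(B)$ is the smallest subset of $\Gamma(\omega)$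 containing $\varepsilon$ and every $a\le b$ with $b\in B$, such that whenever $a$ is in it, $a'\ne\varepsilon$, $\mathtt{pred}(a')=a$ and $\lambda(\pi(a'))=1$, then $a'$ is in it. *)

theory Defs
  imports Main "HOL-Library.Sublist"
begin

(* Labels of a tree plan: One = 1, Inf = \<infinity> *)
datatype lab = One | Inf

definition tree_plan :: "nat list set \<Rightarrow> (nat list \<Rightarrow> lab) \<Rightarrow> bool" where
  "tree_plan G lam \<longleftrightarrow> finite G \<and> [] \<in> G \<and>
     (\<forall>s\<in>G. \<forall>t. prefix t s \<longrightarrow> t \<in> G) \<and> lam [] = One"

(* elements of \<Gamma>(\<omega>): sequences of pairs (i_k, t_k); t_k = None encodes the symbol \<star>,
   t_k = Some n encodes n \<in> \<omega> *)
type_synonym node = "(nat \<times> nat option) list"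

definition piG :: "node \<Rightarrow> nat list" where
  "piG a = map fst a"

definition Gomega :: "nat list set \<Rightarrow> (nat list \<Rightarrow> lab) \<Rightarrow> node set" where
  "Gomega G lam = {a. map fst a \<in> G \<and>
     (\<forall>k < length a. (lam (take (Suc k) (map fst a)) = One \<longrightarrow> snd (a ! k) = None) \<and>
                     (lam (take (Suc k) (map fst a)) = Inf \<longrightarrow> snd (a ! k) \<noteq> None))}"

datatype trm = Var nat | Eps | Meet trm trm | Pred trm

datatype fm = Eq trm trm | Le trm trm | P "nat list" trm
  | Neg fm | Conj fm fm | Ex nat fm

primrec evalt :: "(nat \<Rightarrow> node) \<Rightarrow> trm \<Rightarrow> node" where
  "evalt e (Var x) = e x"
| "evalt e Eps = []"
| "evalt e (Meet s t) = longest_common_prefix (evalt e s) (evalt e t)"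
| "evalt e (Pred t) = butlast (evalt e t)"

primrec fvt :: "trm \<Rightarrow> nat set" where
  "fvt (Var x) = {x}"
| "fvt Eps = {}"
| "fvt (Meet s t) = fvt s \<union> fvt t"
| "fvt (Pred t) = fvt t"

primrec fv :: "fm \<Rightarrow> nat set" where
  "fv (Eq s t) = fvt s \<union> fvt t"
| "fv (Le s t) = fvt s \<union> fvt t"
| "fv (P \<sigma> t) = fvt t"
| "fv (Neg f) = fv f"
| "fv (Conj f g) = fv f \<union> fv g"
| "fv (Ex x f) = fv f - {x}"

primrec sat :: "nat list set \<Rightarrow> (nat list \<Rightarrow> lab) \<Rightarrow> (nat \<Rightarrow> node) \<Rightarrow> fm \<Rightarrow> bool" where
  "sat G lam e (Eq s t) = (evalt e s = evalt e t)"
| "sat G lam e (Le s t) = prefix (evalt e s) (evalt e t)"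
| "sat G lam e (P \<sigma> t) = (\<sigma> \<in> G \<and> piG (evalt e t) = \<sigma>)"
| "sat G lam e (Neg f) = (\<not> sat G lam e f)"
| "sat G lam e (Conj f g) = (sat G lam e f \<and> sat G lam e g)"
| "sat G lam e (Ex x f) = (\<exists>a\<in>Gomega G lam. sat G lam (e(x := a)) f)"

definition acl :: "nat list set \<Rightarrow> (nat list \<Rightarrow> lab) \<Rightarrow> node set \<Rightarrow> node set" where
  "acl G lam B = {a \<in> Gomega G lam. \<exists>\<phi> x e.
      (\<forall>y \<in> fv \<phi> - {x}. e y \<in> B) \<and>
      sat G lam (e(x := a)) \<phi> \<and>
      finite {c \<in> Gomega G lam. sat G lam (e(x := c)) \<phi>}}"

inductive_set tcl :: "nat list set \<Rightarrow> (nat list \<Rightarrow> lab) \<Rightarrow> node set \<Rightarrow> node set"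
  for G lam B where
  tcl_eps: "[] \<in> tcl G lam B"
| tcl_below: "b \<in> B \<Longrightarrow> prefix a b \<Longrightarrow> a \<in> tcl G lam B"
| tcl_succ: "a \<in> tcl G lam B \<Longrightarrow> a' \<in> Gomega G lam \<Longrightarrow> a' \<noteq> [] \<Longrightarrow>
             butlast a' = a \<Longrightarrow> lam (piG a') = One \<Longrightarrow> a' \<in> tcl G lam B"

end

theory Submission
  imports Defs
begin

text \<open>
  A node of \<open>tcl B\<close> is reached from \<open>\<epsilon>\<close> or from a node below a parameter by a chain of
  \<open>1\<close>-labelled steps, which have a unique successor of each type; so it is the only solution of
  \<open>t \<le> x \<and> P\<^sub>\<sigma>(x)\<close> for a suitable term \<open>t\<close> in the parameters. Conversely, a node outside \<open>tcl B\<close>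
  passes, on its way from the root, through an \<open>\<infinity>\<close>-labelled step \<open>p \<prec> p\<cdot>w\<close> leaving \<open>tcl B\<close>.
  Swapping the subtree above \<open>p\<cdot>w\<close> with the one above a sibling \<open>p\<cdot>w'\<close> is an automorphism of
  \<open>\<Gamma>(\<omega>)\<close>; no parameter lies above \<open>p\<cdot>w\<close>, and only finitely many siblings \<open>p\<cdot>w'\<close> lie below
  a parameter, so for all other siblings the swap fixes the parameters of a formula and moves
  the node to a different solution. Hence the node has infinitely many conjugates.
\<close>

lemma evalt_cong: "(\<forall>y\<in>fvt t. e y = e' y) \<Longrightarrow> evalt e t = evalt e' t"
  by (induction t) auto

lemma sat_cong: "(\<forall>y\<in>fv \<phi>. e y = e' y) \<Longrightarrow> sat G lam e \<phi> = sat G lam e' \<phi>"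
proof (induction \<phi> arbitrary: e e')
  case (Ex x \<phi>)
  have "sat G lam (e(x := a)) \<phi> = sat G lam (e'(x := a)) \<phi>" for a
    using Ex.prems by (intro Ex.IH) auto
  then show ?case by simp
next
  case (Eq s t)
  then show ?case using evalt_cong[of s e e'] evalt_cong[of t e e'] by simp
next
  case (Le s t)
  then show ?case using evalt_cong[of s e e'] evalt_cong[of t e e'] by simp
next
  case (P \<sigma> t)
  then show ?case using evalt_cong[of t e e'] by simp
next
  case (Conj \<phi>1 \<phi>2)
  then have "sat G lam e \<phi>1 = sat G lam e' \<phi>1" "sat G lam e \<phi>2 = sat G lam e' \<phi>2" by auto
  then show ?case by simp
qed simp

lemma finite_fvt: "finite (fvt t)"
  by (induction t) auto

lemma finite_fv: "finite (fv \<phi>)"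
  by (induction \<phi>) (auto simp: finite_fvt)

lemma evalt_Pred_pow: "evalt e ((Pred ^^ m) t) = (butlast ^^ m) (evalt e t)"
  by (induction m) auto

lemma fvt_Pred_pow: "fvt ((Pred ^^ m) t) = fvt t"
  by (induction m) auto

lemma butlast_pow: "(butlast ^^ m) b = take (length b - m) b"
  by (induction m) (auto simp: butlast_take)

lemma longest_common_prefix_map_prefix_iso:
  assumes "\<And>c d. prefix (f c) (f d) \<longleftrightarrow> prefix c d" and "\<And>c. f (f c) = c"
  shows "longest_common_prefix (f c) (f d) = f (longest_common_prefix c d)"
proof -
  have lcp_iff: "prefix w (longest_common_prefix c d) \<longleftrightarrow> prefix w c \<and> prefix w d" for w c d :: "'a list"
    by (meson longest_common_prefix_max_prefix longest_common_prefix_prefix1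
          longest_common_prefix_prefix2 prefix_order.trans)
  have "prefix w (longest_common_prefix (f c) (f d)) \<longleftrightarrow> prefix w (f (longest_common_prefix c d))" for w
  proof -
    have "prefix w (longest_common_prefix (f c) (f d)) \<longleftrightarrow> prefix (f w) c \<and> prefix (f w) d"
      unfolding lcp_iff by (metis assms)
    also have "\<dots> \<longleftrightarrow> prefix w (f (longest_common_prefix c d))"
      unfolding lcp_iff[symmetric] by (metis assms)
    finally show ?thesis .
  qed
  then show ?thesis
    by (meson prefix_order.antisym prefix_order.refl)
qed

lemma sat_comp_automorphism:
  assumes prefix_iff: "\<And>c d. prefix (f c) (f d) \<longleftrightarrow> prefix c d"
    and involution: "\<And>c. f (f c) = c"
    and butlast_f: "\<And>c. butlast (f c) = f (butlast c)"
    and f_Nil: "f [] = []"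
    and map_fst_f: "\<And>c. map fst (f c) = map fst c"
    and Gomega_f: "\<And>c. f c \<in> Gomega G lam \<longleftrightarrow> c \<in> Gomega G lam"
  shows "sat G lam (f \<circ> e) \<phi> = sat G lam e \<phi>"
proof -
  have f_eq_iff: "f c = f d \<longleftrightarrow> c = d" for c d
    by (metis involution)
  have evalt_f: "evalt (f \<circ> e) t = f (evalt e t)" for e t
    by (induction t)
       (auto simp: f_Nil butlast_f longest_common_prefix_map_prefix_iso[OF prefix_iff involution])
  show ?thesis
  proof (induction \<phi> arbitrary: e)
    case (Ex x \<phi>)
    have "(f \<circ> e)(x := a) = f \<circ> (e(x := f a))" for a
      by (rule ext) (simp add: involution)
    then have IH: "sat G lam ((f \<circ> e)(x := a)) \<phi> = sat G lam (e(x := f a)) \<phi>" for a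
      using Ex.IH by presburger
    have "(\<exists>a\<in>Gomega G lam. sat G lam (e(x := f a)) \<phi>) \<longleftrightarrow> (\<exists>a\<in>Gomega G lam. sat G lam (e(x := a)) \<phi>)"
      using Gomega_f involution by (metis (no_types, lifting))
    then show ?case
      by (simp only: sat.simps IH)
  qed (simp_all add: evalt_f f_eq_iff prefix_iff piG_def map_fst_f)
qed

subsection \<open>Swapping two sibling subtrees\<close>

definition swap_subtrees :: "node \<Rightarrow> nat \<times> nat option \<Rightarrow> nat \<times> nat option \<Rightarrow> node \<Rightarrow> node" where
  "swap_subtrees p u v c =
     (if prefix (p @ [u]) c then p @ [v] @ drop (Suc (length p)) c
      else if prefix (p @ [v]) c then p @ [u] @ drop (Suc (length p)) c
      else c)"

lemma prefix_snoc_append_iff [simp]: "prefix (p @ [u]) (p @ [v] @ r) \<longleftrightarrow> u = v"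
  by (auto simp: prefix_def)

lemma not_prefix_snoc_self [simp]: "\<not> prefix (p @ [u]) p"
  using prefix_length_le by fastforce

lemma swap_subtrees_left: "c = p @ [u] @ r \<Longrightarrow> swap_subtrees p u v c = p @ [v] @ r"
  unfolding swap_subtrees_def by simp

lemma swap_subtrees_right: "u \<noteq> v \<Longrightarrow> c = p @ [v] @ r \<Longrightarrow> swap_subtrees p u v c = p @ [u] @ r"
  unfolding swap_subtrees_def by simp

lemma swap_subtrees_outside:
  "\<not> prefix (p @ [u]) c \<Longrightarrow> \<not> prefix (p @ [v]) c \<Longrightarrow> swap_subtrees p u v c = c"
  unfolding swap_subtrees_def by simp

lemma swap_subtrees_cases:
  obtains r where "c = p @ [u] @ r"
    | r where "c = p @ [v] @ r"
    | "\<not> prefix (p @ [u]) c" "\<not> prefix (p @ [v]) c"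
  by (metis prefixE append_assoc)

lemma swap_subtrees_commute: "u \<noteq> v \<Longrightarrow> swap_subtrees p u v c = swap_subtrees p v u c"
  by (rule swap_subtrees_cases[where c=c and p=p and u=u and v=v])
     (auto simp: swap_subtrees_left swap_subtrees_right swap_subtrees_outside)

lemma swap_subtrees_involution: "u \<noteq> v \<Longrightarrow> swap_subtrees p u v (swap_subtrees p u v c) = c"
  by (rule swap_subtrees_cases[where c=c and p=p and u=u and v=v])
     (auto simp: swap_subtrees_left swap_subtrees_right swap_subtrees_outside)

lemma swap_subtrees_Nil: "swap_subtrees p u v [] = []"
  unfolding swap_subtrees_def by auto

lemma swap_subtrees_mono:
  assumes uv: "u \<noteq> v" and cd: "prefix c d"
  shows "prefix (swap_subtrees p u v c) (swap_subtrees p u v d)"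
proof (rule swap_subtrees_cases[where c=c and p=p and u=u and v=v])
  fix r assume c: "c = p @ [u] @ r"
  then obtain s where "d = p @ [u] @ r @ s" using cd by (auto simp: prefix_def)
  then show ?thesis using c by (simp add: swap_subtrees_left)
next
  fix r assume c: "c = p @ [v] @ r"
  then obtain s where "d = p @ [v] @ r @ s" using cd by (auto simp: prefix_def)
  then show ?thesis using c uv by (simp add: swap_subtrees_right)
next
  assume nu: "\<not> prefix (p @ [u]) c" and nv: "\<not> prefix (p @ [v]) c"
  then have fixed: "swap_subtrees p u v c = c" by (rule swap_subtrees_outside)
  have below_p: "prefix c p" if "prefix (p @ [w]) d" "w = u \<or> w = v" for w
    using prefix_same_cases[OF cd that(1)] that(2) nu nv by auto
  show ?thesis
  proof (rule swap_subtrees_cases[where c=d and p=p and u=u and v=v])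
    fix r assume d: "d = p @ [u] @ r"
    then show ?thesis
      using below_p[of u] fixed swap_subtrees_left[OF d, of v] by (auto intro: prefix_order.trans)
  next
    fix r assume d: "d = p @ [v] @ r"
    then show ?thesis
      using below_p[of v] fixed swap_subtrees_right[OF uv d] by (auto intro: prefix_order.trans)
  next
    assume "\<not> prefix (p @ [u]) d" "\<not> prefix (p @ [v]) d"
    then show ?thesis using fixed cd swap_subtrees_outside by metis
  qed
qed

lemma swap_subtrees_prefix_iff:
  "u \<noteq> v \<Longrightarrow> prefix (swap_subtrees p u v c) (swap_subtrees p u v d) \<longleftrightarrow> prefix c d"
  by (metis swap_subtrees_mono swap_subtrees_involution)

lemma swap_subtrees_butlast_left:
  "c = p @ [u] @ r \<Longrightarrow> butlast (swap_subtrees p u v c) = swap_subtrees p u v (butlast c)"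
  by (cases "r = []") (simp_all add: swap_subtrees_left swap_subtrees_outside butlast_append)

lemma swap_subtrees_butlast:
  assumes uv: "u \<noteq> v"
  shows "butlast (swap_subtrees p u v c) = swap_subtrees p u v (butlast c)"
proof (rule swap_subtrees_cases[where c=c and p=p and u=u and v=v])
  fix r assume "c = p @ [u] @ r"
  then show ?thesis by (rule swap_subtrees_butlast_left)
next
  fix r assume "c = p @ [v] @ r"
  then show ?thesis using swap_subtrees_butlast_left swap_subtrees_commute uv by metis
next
  assume nu: "\<not> prefix (p @ [u]) c" and nv: "\<not> prefix (p @ [v]) c"
  then have "\<not> prefix (p @ [u]) (butlast c)" "\<not> prefix (p @ [v]) (butlast c)"
    by (meson prefixeq_butlast prefix_order.trans)+
  then show ?thesis using nu nv by (simp add: swap_subtrees_outside)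
qed

lemma map_fst_swap_subtrees: "fst u = fst v \<Longrightarrow> map fst (swap_subtrees p u v c) = map fst c"
  by (rule swap_subtrees_cases[where c=c and p=p and u=u and v=v]) (auto simp: swap_subtrees_def)

lemma map_snd_None_swap_subtrees:
  "(snd u = None) = (snd v = None) \<Longrightarrow>
   map (\<lambda>x. snd x = None) (swap_subtrees p u v c) = map (\<lambda>x. snd x = None) c"
  by (rule swap_subtrees_cases[where c=c and p=p and u=u and v=v]) (auto simp: swap_subtrees_def)

lemma Nil_in_Gomega: "tree_plan G lam \<Longrightarrow> [] \<in> Gomega G lam"
  unfolding tree_plan_def Gomega_def by auto

lemma Gomega_prefix_closed:
  assumes tp: "tree_plan G lam" and b: "b \<in> Gomega G lam" and ab: "prefix a b"
  shows "a \<in> Gomega G lam"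
proof -
  obtain r where br: "b = a @ r" using ab prefixE by blast
  have mb: "map fst b = map fst a @ map fst r" using br by simp
  have "map fst a \<in> G" using tp b mb unfolding tree_plan_def Gomega_def by auto
  moreover have "(lam (take (Suc k) (map fst a)) = One \<longrightarrow> snd (a ! k) = None) \<and>
      (lam (take (Suc k) (map fst a)) = Inf \<longrightarrow> snd (a ! k) \<noteq> None)" if k: "k < length a" for k
  proof -
    have "take (Suc k) (map fst b) = take (Suc k) (map fst a)" "b ! k = a ! k" "k < length b"
      using br k by (simp_all add: nth_append)
    moreover have "\<forall>k<length b. (lam (take (Suc k) (map fst b)) = One \<longrightarrow> snd (b ! k) = None) \<and>
        (lam (take (Suc k) (map fst b)) = Inf \<longrightarrow> snd (b ! k) \<noteq> None)"
      using b by (simp add: Gomega_def)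
    ultimately show ?thesis by metis
  qed
  ultimately show ?thesis unfolding Gomega_def by auto
qed

lemma Gomega_cong:
  assumes fst_eq: "map fst c = map fst d"
    and None_eq: "map (\<lambda>x. snd x = None) c = map (\<lambda>x. snd x = None) d"
  shows "c \<in> Gomega G lam \<longleftrightarrow> d \<in> Gomega G lam"
proof -
  have len: "length c = length d" using arg_cong[OF fst_eq, of length] by simp
  have None_k: "(snd (c ! k) = None) = (snd (d ! k) = None)" if "k < length d" for k
    using arg_cong[OF None_eq, of "\<lambda>xs. xs ! k"] that len by simp
  have "(\<forall>k < length c. (lam (take (Suc k) (map fst c)) = One \<longrightarrow> snd (c ! k) = None) \<and>
                     (lam (take (Suc k) (map fst c)) = Inf \<longrightarrow> snd (c ! k) \<noteq> None)) =
        (\<forall>k < length d. (lam (take (Suc k) (map fst d)) = One \<longrightarrow> snd (d ! k) = None) \<and>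
                     (lam (take (Suc k) (map fst d)) = Inf \<longrightarrow> snd (d ! k) \<noteq> None))"
    unfolding len fst_eq using None_k by (intro all_cong) simp
  then show ?thesis unfolding Gomega_def mem_Collect_eq fst_eq by simp
qed

lemma sat_comp_swap_subtrees:
  assumes "u \<noteq> v" "fst u = fst v" "(snd u = None) = (snd v = None)"
  shows "sat G lam (swap_subtrees p u v \<circ> e) \<phi> = sat G lam e \<phi>"
proof (rule sat_comp_automorphism)
  show "swap_subtrees p u v c \<in> Gomega G lam \<longleftrightarrow> c \<in> Gomega G lam" for c
    using assms by (intro Gomega_cong map_fst_swap_subtrees map_snd_None_swap_subtrees)
qed (use assms in \<open>simp_all add: swap_subtrees_prefix_iff swap_subtrees_involution
       swap_subtrees_butlast swap_subtrees_Nil map_fst_swap_subtrees\<close>)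

subsection \<open>Tree closure is algebraic\<close>

definition one_labelled_above :: "(nat list \<Rightarrow> lab) \<Rightarrow> node \<Rightarrow> node \<Rightarrow> bool" where
  "one_labelled_above lam a0 a \<longleftrightarrow>
     (\<forall>j. length a0 \<le> j \<and> j < length a \<longrightarrow> lam (take (Suc j) (map fst a)) = One)"

lemma tcl_subset_Gomega:
  assumes tp: "tree_plan G lam" and B: "B \<subseteq> Gomega G lam"
  shows "tcl G lam B \<subseteq> Gomega G lam"
proof
  fix a assume "a \<in> tcl G lam B"
  then show "a \<in> Gomega G lam"
  proof induction
    case tcl_eps
    show ?case using tp by (rule Nil_in_Gomega)
  next
    case (tcl_below b a)
    then show ?case using Gomega_prefix_closed[OF tp] B by blast
  qed
qed

lemma tcl_one_labelled_above_anchor: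
  assumes "a \<in> tcl G lam B"
  obtains a0 where "prefix a0 a" "a0 = [] \<or> (\<exists>b\<in>B. prefix a0 b)" "one_labelled_above lam a0 a"
  using assms
proof (induction arbitrary: thesis)
  case tcl_eps
  then show ?case by (auto simp: one_labelled_above_def)
next
  case (tcl_below b a)
  show ?case
    by (rule tcl_below.prems[of a]) (use tcl_below in \<open>auto simp: one_labelled_above_def\<close>)
next
  case (tcl_succ a a')
  obtain a0 where a0: "prefix a0 a" "a0 = [] \<or> (\<exists>b\<in>B. prefix a0 b)" "one_labelled_above lam a0 a"
    using tcl_succ.IH by blast
  obtain x where a': "a' = a @ [x]" using tcl_succ by (metis append_butlast_last_id)
  have "lam (take (Suc j) (map fst a')) = One" if "length a0 \<le> j" "j < length a'" for j
  proof (cases "j < length a")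
    case True
    then show ?thesis using a0(3) that a' by (simp add: one_labelled_above_def)
  next
    case False
    then have "take (Suc j) (map fst a') = piG a'" using that a' by (simp add: piG_def)
    then show ?thesis using tcl_succ by simp
  qed
  then have "one_labelled_above lam a0 a'" by (simp add: one_labelled_above_def)
  moreover have "prefix a0 a'" using a0(1) a' by (simp add: prefix_order.trans)
  ultimately show ?case using a0(2) tcl_succ.prems by blast
qed

lemma Gomega_eq_if_one_labelled_above:
  assumes a: "a \<in> Gomega G lam" and c: "c \<in> Gomega G lam" and type_eq: "map fst c = map fst a"
    and "prefix a0 a" "prefix a0 c" and one: "one_labelled_above lam a0 a"
  shows "c = a"
proof (rule nth_equalityI)
  show len: "length c = length a" using type_eq by (metis length_map)
  fix j assume j: "j < length c"
  show "c ! j = a ! j"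
  proof (cases "j < length a0")
    case True
    obtain r s where "a = a0 @ r" "c = a0 @ s"
      using \<open>prefix a0 a\<close> \<open>prefix a0 c\<close> by (auto simp: prefix_def)
    then show ?thesis using True by (simp add: nth_append)
  next
    case False
    then have one_j: "lam (take (Suc j) (map fst a)) = One"
      using one j len by (simp add: one_labelled_above_def)
    have "snd (a ! j) = None"
      using a one_j j len unfolding Gomega_def by auto
    moreover have "snd (c ! j) = None"
      using c one_j j type_eq unfolding Gomega_def by auto
    moreover have "fst (c ! j) = fst (a ! j)" using type_eq j len by (metis nth_map)
    ultimately show ?thesis by (simp add: prod_eq_iff)
  qed
qed

lemma acl_if_one_labelled_above_term:
  assumes aG: "a \<in> Gomega G lam" and "prefix a0 a" and one: "one_labelled_above lam a0 a"
    and params: "\<forall>y\<in>fvt t. e y \<in> B" and "0 \<notin> fvt t" and t_a0: "evalt e t = a0"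
  shows "a \<in> acl G lam B"
proof -
  define \<phi> where "\<phi> = Conj (Le t (Var 0)) (P (piG a) (Var 0))"
  have "evalt (e(0 := c)) t = a0" for c
    using \<open>0 \<notin> fvt t\<close> t_a0 evalt_cong[of t "e(0 := c)" e] by auto
  then have sat_iff: "sat G lam (e(0 := c)) \<phi> \<longleftrightarrow> prefix a0 c \<and> piG a \<in> G \<and> piG c = piG a" for c
    unfolding \<phi>_def by simp
  have "{c \<in> Gomega G lam. sat G lam (e(0 := c)) \<phi>} \<subseteq> {a}"
    using sat_iff Gomega_eq_if_one_labelled_above[OF aG _ _ \<open>prefix a0 a\<close> _ one]
    by (auto simp: piG_def)
  then have fin: "finite {c \<in> Gomega G lam. sat G lam (e(0 := c)) \<phi>}"
    using finite_subset by blast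
  have "piG a \<in> G"
    using aG by (simp add: Gomega_def piG_def)
  then have sat_a: "sat G lam (e(0 := a)) \<phi>"
    using sat_iff[of a] \<open>prefix a0 a\<close> by simp
  have params_B: "\<forall>y \<in> fv \<phi> - {0}. e y \<in> B"
    using params unfolding \<phi>_def by auto
  show ?thesis
    unfolding acl_def using aG params_B sat_a fin by (intro CollectI conjI exI) auto
qed

lemma tcl_subset_acl:
  assumes tp: "tree_plan G lam" and B: "B \<subseteq> Gomega G lam"
  shows "tcl G lam B \<subseteq> acl G lam B"
proof
  fix a assume a: "a \<in> tcl G lam B"
  have aG: "a \<in> Gomega G lam" using tcl_subset_Gomega[OF tp B] a by blast
  obtain a0 where a0: "prefix a0 a" "a0 = [] \<or> (\<exists>b\<in>B. prefix a0 b)" "one_labelled_above lam a0 a"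
    using tcl_one_labelled_above_anchor[OF a] by blast
  show "a \<in> acl G lam B"
  proof (cases "a0 = []")
    case True
    show ?thesis
      by (rule acl_if_one_labelled_above_term[OF aG a0(1,3), where t = Eps and e = "\<lambda>_. []"])
         (simp_all add: True)
  next
    case False
    then obtain b where b: "b \<in> B" "prefix a0 b" using a0(2) by blast
    then obtain r where "b = a0 @ r" by (auto simp: prefix_def)
    have term_a0: "evalt (\<lambda>_. b) ((Pred ^^ length r) (Var 1)) = a0"
      using \<open>b = a0 @ r\<close> by (simp add: evalt_Pred_pow butlast_pow)
    show ?thesis
      by (rule acl_if_one_labelled_above_term[OF aG a0(1,3) _ _ term_a0])
         (simp_all add: fvt_Pred_pow b(1))
  qed
qed

subsection \<open>Algebraic elements lie in the tree closure\<close>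

lemma tcl_exit_at_Inf_step:
  assumes tp: "tree_plan G lam" and aG: "a \<in> Gomega G lam" and a: "a \<notin> tcl G lam B"
  obtains p w r n where "a = p @ [w] @ r" "p \<in> tcl G lam B" "p @ [w] \<notin> tcl G lam B"
    "snd w = Some n"
proof -
  define J where "J = {j. take j a \<notin> tcl G lam B}"
  define j where "j = (LEAST j. j \<in> J)"
  have "length a \<in> J" unfolding J_def using a by simp
  then have out: "j \<in> J" and "j \<le> length a"
    unfolding j_def by (rule LeastI, rule Least_le)
  moreover have "j \<noteq> 0" using out tcl.tcl_eps unfolding J_def by (metis mem_Collect_eq take0)
  ultimately obtain k where jk: "j = Suc k" and k: "k < length a"
    using not0_implies_Suc by fastforce
  define p w where "p = take k a" and "w = a ! k"
  have "k \<notin> J" unfolding j_def using not_less_Least[of k "\<lambda>j. j \<in> J"] jk j_def by simp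
  then have in_tcl: "p \<in> tcl G lam B" unfolding J_def p_def by simp
  have step: "take (Suc k) a = p @ [w]"
    unfolding p_def w_def using k by (simp add: take_Suc_conv_app_nth)
  then have out_step: "p @ [w] \<notin> tcl G lam B" using out jk unfolding J_def by simp
  have a_eq: "a = p @ [w] @ drop (Suc k) a"
    using append_take_drop_id[of "Suc k" a] step by simp
  have "lam (piG (p @ [w])) \<noteq> One"
  proof
    assume "lam (piG (p @ [w])) = One"
    moreover have "p @ [w] \<in> Gomega G lam"
      using Gomega_prefix_closed[OF tp aG] step by (metis take_is_prefix)
    ultimately have "p @ [w] \<in> tcl G lam B" by (intro tcl.tcl_succ[OF in_tcl]) simp_all
    then show False using out_step by contradiction
  qed
  then have "lam (take (Suc k) (map fst a)) = Inf"
    using step by (cases "lam (piG (p @ [w]))") (simp_all add: piG_def take_map)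
  moreover have "\<forall>k<length a. lam (take (Suc k) (map fst a)) = Inf \<longrightarrow> snd (a ! k) \<noteq> None"
    using aG by (simp add: Gomega_def)
  ultimately obtain n where "snd w = Some n"
    using k unfolding w_def by blast
  then show ?thesis
    using that[OF a_eq in_tcl out_step] by blast
qed

lemma finite_Inf_children_below:
  assumes "finite S"
  shows "finite {m. \<exists>b\<in>S. prefix (p @ [(i, Some m)]) b}"
proof (rule finite_subset)
  show "{m. \<exists>b\<in>S. prefix (p @ [(i, Some m)]) b} \<subseteq> (\<lambda>b. the (snd (b ! length p))) ` S"
  proof
    fix m assume "m \<in> {m. \<exists>b\<in>S. prefix (p @ [(i, Some m)]) b}"
    then obtain b r' where "b \<in> S" "b = p @ [(i, Some m)] @ r'"
      by (auto simp: prefix_def)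
    then show "m \<in> (\<lambda>b. the (snd (b ! length p))) ` S"
      by (auto simp: nth_append image_iff intro!: bexI[of _ b])
  qed
qed (use assms in simp)

lemma infinite_solutions_if_params_avoid_branch:
  assumes aG: "p @ [w] @ r \<in> Gomega G lam" and sat_a: "sat G lam (e(x := p @ [w] @ r)) \<phi>"
    and w: "snd w = Some n" and avoid: "\<forall>y\<in>fv \<phi> - {x}. \<not> prefix (p @ [w]) (e y)"
  shows "infinite {c \<in> Gomega G lam. sat G lam (e(x := c)) \<phi>}"
proof -
  define sibling where "sibling m = (fst w, Some m)" for m :: nat
  define M where "M = {m. \<exists>b\<in>e ` (fv \<phi> - {x}). prefix (p @ [(fst w, Some m)]) b}"
  have "finite M"
    unfolding M_def using finite_fv by (intro finite_Inf_children_below) simp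
  have solution: "p @ [sibling m] @ r \<in> {c \<in> Gomega G lam. sat G lam (e(x := c)) \<phi>}"
    if "m \<notin> M" "m \<noteq> n" for m
  proof -
    let ?f = "swap_subtrees p w (sibling m)"
    have uv: "w \<noteq> sibling m" and same_type: "fst w = fst (sibling m)"
      and same_kind: "(snd w = None) = (snd (sibling m) = None)"
      using w that(2) by (auto simp: sibling_def prod_eq_iff)
    have f_a: "?f (p @ [w] @ r) = p @ [sibling m] @ r" by (simp add: swap_subtrees_left)
    have "?f (e y) = e y" if "y \<in> fv \<phi> - {x}" for y
    proof (rule swap_subtrees_outside)
      show "\<not> prefix (p @ [w]) (e y)" using avoid that by blast
      show "\<not> prefix (p @ [sibling m]) (e y)" using \<open>m \<notin> M\<close> that unfolding M_def sibling_def by blast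
    qed
    then have "\<forall>y\<in>fv \<phi>. (?f \<circ> e(x := p @ [w] @ r)) y = (e(x := p @ [sibling m] @ r)) y"
      using f_a by simp
    moreover have "sat G lam (?f \<circ> e(x := p @ [w] @ r)) \<phi>"
      using sat_a sat_comp_swap_subtrees[OF uv same_type same_kind] by blast
    moreover have "?f (p @ [w] @ r) \<in> Gomega G lam"
      using aG Gomega_cong[OF map_fst_swap_subtrees[OF same_type] map_snd_None_swap_subtrees[OF same_kind]]
      by blast
    ultimately show ?thesis
      using sat_cong[of \<phi> "?f \<circ> e(x := p @ [w] @ r)" "e(x := p @ [sibling m] @ r)" G lam] f_a
      by simp
  qed
  have "inj (\<lambda>m. p @ [sibling m] @ r)" by (auto simp: inj_def sibling_def)
  moreover have "infinite (- (M \<union> {n}))" using \<open>finite M\<close> by (simp add: Compl_eq_Diff_UNIV Diff_infinite_finite)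
  ultimately have "infinite ((\<lambda>m. p @ [sibling m] @ r) ` (- (M \<union> {n})))"
    by (metis finite_imageD inj_on_subset subset_UNIV)
  moreover have "(\<lambda>m. p @ [sibling m] @ r) ` (- (M \<union> {n})) \<subseteq> {c \<in> Gomega G lam. sat G lam (e(x := c)) \<phi>}"
    using solution by blast
  ultimately show ?thesis
    using finite_subset by blast
qed

lemma acl_subset_tcl:
  assumes tp: "tree_plan G lam"
  shows "acl G lam B \<subseteq> tcl G lam B"
proof
  fix a assume "a \<in> acl G lam B"
  then obtain \<phi> x e where aG: "a \<in> Gomega G lam" and params: "\<forall>y \<in> fv \<phi> - {x}. e y \<in> B"
    and sat_a: "sat G lam (e(x := a)) \<phi>" and fin: "finite {c \<in> Gomega G lam. sat G lam (e(x := c)) \<phi>}"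
    unfolding acl_def by blast
  show "a \<in> tcl G lam B"
  proof (rule ccontr)
    assume "a \<notin> tcl G lam B"
    then obtain p w r n where a: "a = p @ [w] @ r" and out: "p @ [w] \<notin> tcl G lam B"
      and w: "snd w = Some n"
      by (rule tcl_exit_at_Inf_step[OF tp aG])
    have "\<forall>y\<in>fv \<phi> - {x}. \<not> prefix (p @ [w]) (e y)"
      using params out tcl.tcl_below by blast
    then show False
      using infinite_solutions_if_params_avoid_branch[OF aG[unfolded a] sat_a[unfolded a] w] fin by blast
  qed
qed

theorem mainTheorem17:
  assumes "tree_plan G lam"
    and "B \<subseteq> Gomega G lam"
  shows "acl G lam B = tcl G lam B"
  using acl_subset_tcl[OF assms(1)] tcl_subset_acl[OF assms] by blast

end
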